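(* Every PCMC model exhibits uniform expansion. Precisely: let $U_1=\{1,\dots,n\}$ carry a PCMC rate family $(q_{mm'})_{m\ne m'}$, and for $k\ge 1$ let $U_k=\{(m,j):1\le m\le n,\ 1\le j\le k\}$ carry a PCMC rate family $(q^{(k)}_{xy})_{x\neq y}$ such that $q^{(k)}_{(m,j),(m',j')}=q_{mm'}$ whenever $m\neq m'$, and $q^{(k)}_{(m,j),(m,j')}=q^{(k)}_{(m,j'),(m,j)}$ for $j\neq j'$ (so the $k$ elements $(m,1),\dots,(m,k)$ are copies of one another). Then for every $m\in\{1,\dots,n\}$, \[p_{m,U_1}=\sum_{j=1}^k p_{(m,j),U_k},\] where $p_{m,U_1}$ and $p_{(m,j),U_k}$ are the PCMC choice probabilities in the respective models.
   Context: Pairwise Choice Markov Chain (PCMC) model: on a finite set $U$ of alternatives, the parameters are off-diagonal rates $q_{ij}\ge 0$ ($i\neq j\in U$) subject to $q_{ij}+q_{ji}\ge 1$ for all distinct $i,j$. $Q_U$ is the $U\times U$ matrix with these off-diagonal entries and diagonal entries $q_{ii}=-\sum_{j\neq i} q_{ij}$; $\pi_U$ is the unique probability vector with $\pi_U^TQ_U=0$, and the choice probability of $i$ from $U$ is $p_{iU}=\pi_U(i)$. Two elements $i,j$ of a set $S$ are copies if $q_{ik}=q_{jk}$ for all $k\in S\setminus\{i,j\}$ and $q_{ij}=q_{ji}$. Uniform expansion is the property that the probability of choosing some copy of an item from a set containing $k$ copies of each of $n$ items equals the probability of choosing that item from the set with one copy of each. *)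

theory Defs
  imports Complex_Main
begin

definition pcmc_rates :: "'a set \<Rightarrow> ('a \<Rightarrow> 'a \<Rightarrow> real) \<Rightarrow> bool" where
  "pcmc_rates U q \<longleftrightarrow> finite U \<and>
     (\<forall>i\<in>U. \<forall>j\<in>U. i \<noteq> j \<longrightarrow> q i j \<ge> 0 \<and> q i j + q j i \<ge> 1)"

definition Q_matrix :: "'a set \<Rightarrow> ('a \<Rightarrow> 'a \<Rightarrow> real) \<Rightarrow> 'a \<Rightarrow> 'a \<Rightarrow> real" where
  "Q_matrix U q i j = (if i = j then - (\<Sum>k\<in>U - {i}. q i k) else q i j)"

definition stationary_dist :: "'a set \<Rightarrow> ('a \<Rightarrow> 'a \<Rightarrow> real) \<Rightarrow> ('a \<Rightarrow> real) \<Rightarrow> bool" where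
  "stationary_dist U q \<pi> \<longleftrightarrow>
     (\<forall>i\<in>U. \<pi> i \<ge> 0) \<and> (\<forall>i. i \<notin> U \<longrightarrow> \<pi> i = 0) \<and> (\<Sum>i\<in>U. \<pi> i) = 1 \<and>
     (\<forall>j\<in>U. (\<Sum>i\<in>U. \<pi> i * Q_matrix U q i j) = 0)"

definition pcmc_pi :: "'a set \<Rightarrow> ('a \<Rightarrow> 'a \<Rightarrow> real) \<Rightarrow> 'a \<Rightarrow> real" where
  "pcmc_pi U q = (THE \<pi>. stationary_dist U q \<pi>)"

definition pcmc_prob :: "'a set \<Rightarrow> ('a \<Rightarrow> 'a \<Rightarrow> real) \<Rightarrow> 'a \<Rightarrow> real" where
  "pcmc_prob U q i = pcmc_pi U q i"

end

theory Submission
  imports Defs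
begin

text \<open>Existence and uniqueness of the stationary distribution go by induction on the number
  of alternatives: some state s has positive total out-rate, and eliminating it (folding
  every jump i \<rightarrow> s \<rightarrow> j into a direct jump i \<rightarrow> j) yields a PCMC rate family on the
  remaining states whose balanced vectors are exactly the restrictions of the original ones.
  Given the stationary distribution p on U, spreading p m uniformly over the k copies of m
  balances the expanded chain, because a copy receives from the copies of m' exactly k
  times the flow it sends to each of them, while flows among copies of m cancel by symmetry.\<close>

definition out_rate :: "'a set \<Rightarrow> ('a \<Rightarrow> 'a \<Rightarrow> real) \<Rightarrow> 'a \<Rightarrow> real" where
  "out_rate U q i = (\<Sum>j\<in>U-{i}. q i j)"

definition balanced :: "'a set \<Rightarrow> ('a \<Rightarrow> 'a \<Rightarrow> real) \<Rightarrow> ('a \<Rightarrow> real) \<Rightarrow> bool" where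
  "balanced U q p \<longleftrightarrow> (\<forall>j\<in>U. (\<Sum>i\<in>U-{j}. p i * q i j) = p j * out_rate U q j)"

definition prob_vector :: "'a set \<Rightarrow> ('a \<Rightarrow> real) \<Rightarrow> bool" where
  "prob_vector U p \<longleftrightarrow> (\<forall>i\<in>U. 0 \<le> p i) \<and> sum p U = 1"

definition censor :: "'a set \<Rightarrow> ('a \<Rightarrow> 'a \<Rightarrow> real) \<Rightarrow> 'a \<Rightarrow> 'a \<Rightarrow> 'a \<Rightarrow> real" where
  "censor U q s i j = q i j + q i s * q s j / out_rate U q s"

lemma stationary_dist_iff_balanced:
  assumes "finite U"
  shows "stationary_dist U q p \<longleftrightarrow>
           prob_vector U p \<and> (\<forall>i. i \<notin> U \<longrightarrow> p i = 0) \<and> balanced U q p"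
proof -
  have "(\<Sum>i\<in>U. p i * Q_matrix U q i j) = (\<Sum>i\<in>U-{j}. p i * q i j) - p j * out_rate U q j"
    if "j \<in> U" for j
  proof -
    have "(\<Sum>i\<in>U. p i * Q_matrix U q i j) = p j * Q_matrix U q j j + (\<Sum>i\<in>U-{j}. p i * Q_matrix U q i j)"
      using assms that by (simp add: sum.remove)
    also have "(\<Sum>i\<in>U-{j}. p i * Q_matrix U q i j) = (\<Sum>i\<in>U-{j}. p i * q i j)"
      by (rule sum.cong) (auto simp: Q_matrix_def)
    finally show ?thesis by (simp add: Q_matrix_def out_rate_def)
  qed
  then show ?thesis
    by (auto simp: stationary_dist_def balanced_def prob_vector_def)
qed

lemma balanced_divide: "balanced U q p \<Longrightarrow> balanced U q (\<lambda>i. p i / c)"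
  by (simp add: balanced_def sum_divide_distrib[symmetric])

lemma balanced_cong: "(\<And>i. i \<in> U \<Longrightarrow> p i = p' i) \<Longrightarrow> balanced U q p \<Longrightarrow> balanced U q p'"
  unfolding balanced_def by (metis (no_types, lifting) DiffD1 sum.cong)

lemma balance_defect_censor:
  assumes U: "finite U" and s: "s \<in> U" and j: "j \<in> U" "j \<noteq> s"
    and d: "out_rate U q s \<noteq> 0"
    and balanced_at_s: "p s * out_rate U q s = (\<Sum>i\<in>U-{s}. p i * q i s)"
  shows "(\<Sum>i\<in>U-{j}. p i * q i j) - p j * out_rate U q j
       = (\<Sum>i\<in>U-{s}-{j}. p i * censor U q s i j) - p j * out_rate (U-{s}) (censor U q s) j"
proof -
  define V where "V = U - {s} - {j}"
  define d where "d = out_rate U q s"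
  have fV: "finite V" and sV: "s \<notin> V" and jV: "j \<notin> V" using U by (auto simp: V_def)
  have U_minus_j: "U - {j} = insert s V" and U_minus_s: "U - {s} = insert j V"
    using s j by (auto simp: V_def)
  have inflow: "(\<Sum>i\<in>U-{j}. p i * q i j) = p s * q s j + (\<Sum>i\<in>V. p i * q i j)"
    and outflow: "out_rate U q j = q j s + (\<Sum>k\<in>V. q j k)"
    unfolding out_rate_def U_minus_j using fV sV by simp_all
  have d_split: "d = q s j + (\<Sum>k\<in>V. q s k)"
    unfolding d_def out_rate_def U_minus_s using fV jV by simp
  have ps: "p s = (p j * q j s + (\<Sum>i\<in>V. p i * q i s)) / d"
    using balanced_at_s d fV jV by (simp add: d_def U_minus_s field_simps)
  have censored_inflow: "(\<Sum>i\<in>V. p i * censor U q s i j)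
      = (\<Sum>i\<in>V. p i * q i j) + (\<Sum>i\<in>V. p i * q i s) * q s j / d"
    by (simp add: censor_def d_def distrib_left sum.distrib sum_distrib_right
        sum_divide_distrib mult.assoc)
  have censored_outflow: "out_rate (U-{s}) (censor U q s) j = (\<Sum>k\<in>V. q j k) + q j s * (d - q s j) / d"
    using d_split by (simp add: out_rate_def V_def censor_def d_def sum.distrib sum_distrib_left
        sum_divide_distrib)
  show ?thesis
    unfolding V_def[symmetric] inflow outflow censored_inflow censored_outflow ps
    using d by (simp add: d_def field_simps)
qed

lemma balanced_censor:
  assumes "finite U" "s \<in> U" "out_rate U q s \<noteq> 0" "balanced U q p"
  shows "balanced (U-{s}) (censor U q s) p"
  using assms balance_defect_censor[OF assms(1,2) _ _ assms(3), of _ p]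
  by (simp add: balanced_def out_rate_def)

lemma balanced_uncensor:
  assumes U: "finite U" and s: "s \<in> U" and d: "out_rate U q s \<noteq> 0"
    and r: "balanced (U-{s}) (censor U q s) r"
  defines "p \<equiv> r(s := (\<Sum>i\<in>U-{s}. r i * q i s) / out_rate U q s)"
  shows "balanced U q p"
  unfolding balanced_def
proof
  fix j assume j: "j \<in> U"
  have balanced_at_s: "p s * out_rate U q s = (\<Sum>i\<in>U-{s}. p i * q i s)"
    using d by (simp add: p_def)
  show "(\<Sum>i\<in>U-{j}. p i * q i j) = p j * out_rate U q j"
  proof (cases "j = s")
    case True
    then show ?thesis using balanced_at_s by simp
  next
    case False
    have "(\<Sum>i\<in>U-{s}-{j}. p i * censor U q s i j) = p j * out_rate (U-{s}) (censor U q s) j"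
      using r j False by (simp add: balanced_def p_def)
    with balance_defect_censor[OF U s j False d balanced_at_s] show ?thesis by simp
  qed
qed

lemma pcmc_rates_censor:
  assumes q: "pcmc_rates U q" and s: "s \<in> U" and d: "out_rate U q s > 0"
  shows "pcmc_rates (U-{s}) (censor U q s)"
  unfolding pcmc_rates_def
proof (intro conjI ballI impI)
  show "finite (U - {s})" using q by (simp add: pcmc_rates_def)
  fix i j assume i: "i \<in> U-{s}" and j: "j \<in> U-{s}" and ij: "i \<noteq> j"
  have "q i s \<ge> 0" "q s j \<ge> 0" "q j s \<ge> 0" "q s i \<ge> 0" "q i j \<ge> 0" "q i j + q j i \<ge> 1"
    using q s i j ij unfolding pcmc_rates_def by auto
  moreover from this have "q i s * q s j / out_rate U q s \<ge> 0" "q j s * q s i / out_rate U q s \<ge> 0"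
    using d by auto
  ultimately show "0 \<le> censor U q s i j" "1 \<le> censor U q s i j + censor U q s j i"
    unfolding censor_def by linarith+
qed

lemma pcmc_rates_out_rate_pos:
  assumes q: "pcmc_rates U q" and U: "2 \<le> card U"
  obtains s where "s \<in> U" "out_rate U q s > 0"
proof -
  have fin: "finite U" using q by (simp add: pcmc_rates_def)
  obtain a b where ab: "a \<in> U" "b \<in> U" "a \<noteq> b"
    using U card_le_Suc0_iff_eq[OF fin] by (metis not_less_eq_eq numeral_2_eq_2)
  have pos: "out_rate U q x > 0" if "x \<in> U" "y \<in> U" "x \<noteq> y" "q x y > 0" for x y
  proof -
    have "q x y \<le> out_rate U q x"
      unfolding out_rate_def using fin q that by (intro member_le_sum) (auto simp: pcmc_rates_def)
    with that show ?thesis by simp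
  qed
  have "q a b + q b a \<ge> 1" using q ab by (auto simp: pcmc_rates_def)
  then have "q a b > 0 \<or> q b a > 0" by linarith
  with pos ab that show ?thesis by metis
qed

lemma card_le_1_singleton:
  "finite U \<Longrightarrow> U \<noteq> {} \<Longrightarrow> card U \<le> 1 \<Longrightarrow> \<exists>a. U = {a}"
  by (metis card_0_eq card_1_singletonE le_SucE le_zero_eq One_nat_def)

lemma balanced_prob_vector_exists:
  assumes "pcmc_rates U q" "U \<noteq> {}"
  shows "\<exists>p. prob_vector U p \<and> balanced U q p"
  using assms
proof (induction "card U" arbitrary: U q rule: less_induct)
  case less
  have fin: "finite U" using less.prems by (simp add: pcmc_rates_def)
  show ?case
  proof (cases "card U \<le> 1")
    case True
    then obtain a where "U = {a}" using fin less.prems card_le_1_singleton by blast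
    then show ?thesis by (intro exI[of _ "\<lambda>_. 1"]) (simp add: prob_vector_def balanced_def out_rate_def)
  next
    case False
    then have "2 \<le> card U" by simp
    then obtain s where s: "s \<in> U" and d: "out_rate U q s > 0"
      using pcmc_rates_out_rate_pos[OF less.prems(1)] by blast
    have "card (U - {s}) < card U" "card (U - {s}) > 0"
      using fin s False by (simp_all add: card_Diff1_less)
    then obtain r where r: "prob_vector (U-{s}) r" and r_bal: "balanced (U-{s}) (censor U q s) r"
      using less.hyps pcmc_rates_censor[OF less.prems(1) s d] by fastforce
    define p where "p = r(s := (\<Sum>i\<in>U-{s}. r i * q i s) / out_rate U q s)"
    have p_bal: "balanced U q p"
      unfolding p_def using balanced_uncensor[OF fin s _ r_bal] d by simp
    have "p s \<ge> 0"
      using r d less.prems(1) s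
      by (auto simp: p_def prob_vector_def pcmc_rates_def intro!: divide_nonneg_pos sum_nonneg mult_nonneg_nonneg)
    moreover have "\<forall>i\<in>U-{s}. p i \<ge> 0" "sum p (U-{s}) = 1"
      using r by (auto simp: p_def prob_vector_def)
    moreover have "sum p U = p s + sum p (U-{s})"
      using fin s by (simp add: sum.remove)
    ultimately have "\<forall>i\<in>U. p i \<ge> 0" "sum p U > 0"
      by (metis DiffI singletonD, linarith)
    then have "prob_vector U (\<lambda>i. p i / sum p U)"
      by (simp add: prob_vector_def sum_divide_distrib[symmetric])
    with balanced_divide[OF p_bal] show ?thesis by blast
  qed
qed

lemma balanced_sum_Diff_pos:
  assumes "finite U" "s \<in> U" "out_rate U q s \<noteq> 0" "prob_vector U p" "balanced U q p"
  shows "sum p (U-{s}) > 0"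
proof (rule ccontr)
  assume "\<not> sum p (U-{s}) > 0"
  moreover have nonneg: "\<forall>i\<in>U-{s}. p i \<ge> 0" using assms(4) by (simp add: prob_vector_def)
  ultimately have zero: "sum p (U-{s}) = 0" by (meson not_less order.antisym sum_nonneg)
  then have "\<forall>i\<in>U-{s}. p i = 0" using sum_nonneg_eq_0_iff assms(1) nonneg by blast
  then have "p s * out_rate U q s = 0"
    using assms(2,5) unfolding balanced_def by (metis (no_types, lifting) mult_eq_0_iff sum.neutral)
  then have "p s = 0" using assms(3) by simp
  moreover have "sum p U = p s + sum p (U-{s})" using assms(1,2) by (simp add: sum.remove)
  ultimately show False using zero assms(4) by (simp add: prob_vector_def)
qed

lemma balanced_prob_vector_unique:
  assumes "pcmc_rates U q" "prob_vector U p" "balanced U q p" "prob_vector U p'" "balanced U q p'"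
    and "i \<in> U"
  shows "p i = p' i"
  using assms
proof (induction "card U" arbitrary: U q p p' i rule: less_induct)
  case less
  have fin: "finite U" using less.prems by (simp add: pcmc_rates_def)
  show ?case
  proof (cases "card U \<le> 1")
    case True
    then have "U = {i}" using fin less.prems(6) card_le_1_singleton by fastforce
    then show ?thesis using less.prems(2,4) by (simp add: prob_vector_def)
  next
    case False
    then have "2 \<le> card U" by simp
    then obtain s where s: "s \<in> U" and d: "out_rate U q s > 0"
      using pcmc_rates_out_rate_pos[OF less.prems(1)] by blast
    define V where "V = U - {s}"
    define S S' where "S = sum p V" and "S' = sum p' V"
    have S_pos: "S > 0" "S' > 0"
      using balanced_sum_Diff_pos[OF fin s] d less.prems unfolding S_def S'_def V_def by force+
    have "p j / S = p' j / S'" if "j \<in> V" for j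
    proof (rule less.hyps)
      show "card V < card U" unfolding V_def by (rule card_Diff1_less[OF fin s])
      show "pcmc_rates V (censor U q s)" unfolding V_def by (rule pcmc_rates_censor[OF less.prems(1) s d])
      show "balanced V (censor U q s) (\<lambda>i. p i / S)" "balanced V (censor U q s) (\<lambda>i. p' i / S')"
        using balanced_censor[OF fin s] d less.prems(3,5) by (simp_all add: V_def balanced_divide)
      show "prob_vector V (\<lambda>i. p i / S)" "prob_vector V (\<lambda>i. p' i / S')"
        using less.prems(2,4) S_pos
        by (auto simp: prob_vector_def S_def S'_def V_def sum_divide_distrib[symmetric])
    qed (fact that)
    then have on_V: "\<forall>j\<in>V. p j = S / S' * p' j" using S_pos by (auto simp: field_simps)
    have "p s * out_rate U q s = (\<Sum>j\<in>V. p j * q j s)"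
      using less.prems(3) s by (simp add: balanced_def V_def)
    also have "\<dots> = S / S' * (\<Sum>j\<in>V. p' j * q j s)"
      using on_V by (simp add: sum_distrib_left mult.assoc)
    also have "(\<Sum>j\<in>V. p' j * q j s) = p' s * out_rate U q s"
      using less.prems(5) s by (simp add: balanced_def V_def)
    finally have "p s * out_rate U q s = (S / S' * p' s) * out_rate U q s"
      by (simp only: mult.assoc)
    then have "p s = S / S' * p' s" using d by (metis less_irrefl mult_right_cancel)
    with on_V have scaled: "\<forall>j\<in>U. p j = S / S' * p' j" by (auto simp: V_def)
    have "1 = S / S' * sum p' U"
      using less.prems(2) scaled by (simp add: prob_vector_def sum_distrib_left)
    then have "S / S' = 1" using less.prems(4) by (simp add: prob_vector_def)
    with scaled less.prems(6) show ?thesis by simp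
  qed
qed

lemma stationary_dist_ex1:
  assumes q: "pcmc_rates U q" and "U \<noteq> {}"
  shows "\<exists>!p. stationary_dist U q p"
proof -
  have fin: "finite U" using q by (simp add: pcmc_rates_def)
  obtain p where p: "prob_vector U p" "balanced U q p"
    using balanced_prob_vector_exists[OF assms] by blast
  define p0 where "p0 i = (if i \<in> U then p i else 0)" for i
  have "prob_vector U p0" "balanced U q p0"
    using p by (auto simp: p0_def prob_vector_def intro: balanced_cong)
  then have "stationary_dist U q p0"
    by (simp add: stationary_dist_iff_balanced[OF fin] p0_def)
  moreover have "p' = p''" if "stationary_dist U q p'" "stationary_dist U q p''" for p' p''
  proof
    fix i show "p' i = p'' i"
      using that balanced_prob_vector_unique[OF q, of p' p'' i]
      by (cases "i \<in> U") (auto simp: stationary_dist_iff_balanced[OF fin])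
  qed
  ultimately show ?thesis by blast
qed

lemma stationary_dist_pcmc_pi:
  assumes "pcmc_rates U q" "U \<noteq> {}"
  shows "stationary_dist U q (pcmc_pi U q)"
  unfolding pcmc_pi_def using stationary_dist_ex1[OF assms] by (rule theI')

lemma pcmc_pi_eqI:
  assumes q: "pcmc_rates U q" and p: "stationary_dist U q p"
  shows "pcmc_pi U q = p"
proof -
  have U: "U \<noteq> {}" using p by (auto simp: stationary_dist_def)
  show ?thesis
    unfolding pcmc_pi_def using stationary_dist_ex1[OF q U] p by (metis the1_equality)
qed

lemma sum_Times_Diff_singleton:
  assumes "finite A" "finite B" "a \<in> A" "b \<in> B"
  shows "(\<Sum>x\<in>A \<times> B - {(a,b)}. f x) = (\<Sum>m\<in>A-{a}. \<Sum>j\<in>B. f (m,j)) + (\<Sum>j\<in>B-{b}. f (a,j))"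
proof -
  have split: "A \<times> B - {(a,b)} = ((A-{a}) \<times> B) \<union> ({a} \<times> (B-{b}))" using assms by auto
  have "(\<Sum>x\<in>A \<times> B - {(a,b)}. f x) = (\<Sum>x\<in>(A-{a}) \<times> B. f x) + (\<Sum>x\<in>{a} \<times> (B-{b}). f x)"
    unfolding split using assms by (intro sum.union_disjoint) auto
  also have "(\<Sum>x\<in>(A-{a}) \<times> B. f x) = (\<Sum>m\<in>A-{a}. \<Sum>j\<in>B. f (m,j))"
    by (simp add: sum.cartesian_product)
  also have "(\<Sum>x\<in>{a} \<times> (B-{b}). f x) = (\<Sum>m\<in>{a}. \<Sum>j\<in>B-{b}. f (m,j))"
    by (simp only: sum.cartesian_product case_prod_beta' prod.collapse)
  finally show ?thesis by simp
qed

lemma stationary_dist_copies: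
  fixes q :: "'a \<Rightarrow> 'a \<Rightarrow> real" and qk :: "'a \<times> 'b \<Rightarrow> 'a \<times> 'b \<Rightarrow> real"
  assumes U: "finite U" and K: "finite K" "K \<noteq> {}"
    and p: "stationary_dist U q p"
    and across: "\<And>m m' j j'. m \<in> U \<Longrightarrow> m' \<in> U \<Longrightarrow> j \<in> K \<Longrightarrow> j' \<in> K \<Longrightarrow> m \<noteq> m' \<Longrightarrow>
                   qk (m, j) (m', j') = q m m'"
    and within: "\<And>m j j'. m \<in> U \<Longrightarrow> j \<in> K \<Longrightarrow> j' \<in> K \<Longrightarrow> j \<noteq> j' \<Longrightarrow>
                   qk (m, j) (m, j') = qk (m, j') (m, j)"
  defines "pk \<equiv> \<lambda>x. if x \<in> U \<times> K then p (fst x) / card K else 0"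
  shows "stationary_dist (U \<times> K) qk pk"
proof -
  have k_pos: "real (card K) > 0" using K by (simp add: card_gt_0_iff)
  from p have p_prob: "prob_vector U p" and p_bal: "balanced U q p"
    by (simp_all add: stationary_dist_iff_balanced[OF U])
  have "sum pk (U \<times> K) = (\<Sum>m\<in>U. \<Sum>j\<in>K. pk (m,j))"
    by (simp add: sum.cartesian_product)
  also have "\<dots> = sum p U"
    using k_pos by (simp add: pk_def)
  finally have "prob_vector (U \<times> K) pk"
    using p_prob k_pos by (auto simp: prob_vector_def pk_def)
  moreover have "balanced (U \<times> K) qk pk"
    unfolding balanced_def
  proof (intro ballI, clarify)
    fix a b assume ab: "a \<in> U" "b \<in> K"
    have pk_ab: "pk (a,j) = p a / card K" if "j \<in> K" for j using ab that by (simp add: pk_def)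
    have inflow_across: "(\<Sum>m\<in>U-{a}. \<Sum>j\<in>K. pk (m,j) * qk (m,j) (a,b)) = (\<Sum>m\<in>U-{a}. p m * q m a)"
    proof (rule sum.cong)
      fix m assume m: "m \<in> U - {a}"
      have "(\<Sum>j\<in>K. pk (m,j) * qk (m,j) (a,b)) = (\<Sum>j\<in>K. p m / card K * q m a)"
        using m ab by (intro sum.cong) (auto simp: pk_def across)
      also have "\<dots> = p m * q m a" using k_pos by simp
      finally show "(\<Sum>j\<in>K. pk (m,j) * qk (m,j) (a,b)) = p m * q m a" .
    qed simp
    have inflow_within: "(\<Sum>j\<in>K-{b}. pk (a,j) * qk (a,j) (a,b)) = pk (a,b) * (\<Sum>j\<in>K-{b}. qk (a,b) (a,j))"
      unfolding sum_distrib_left using ab pk_ab within by (intro sum.cong) auto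
    have outflow_across: "(\<Sum>m\<in>U-{a}. \<Sum>j\<in>K. qk (a,b) (m,j)) = card K * out_rate U q a"
      unfolding out_rate_def sum_distrib_left using ab across by (intro sum.cong) auto
    have "(\<Sum>x\<in>U \<times> K - {(a,b)}. pk x * qk x (a,b))
        = p a * out_rate U q a + pk (a,b) * (\<Sum>j\<in>K-{b}. qk (a,b) (a,j))"
      using ab p_bal
      by (simp add: sum_Times_Diff_singleton[OF U K(1) ab] inflow_across inflow_within balanced_def)
    also have "\<dots> = pk (a,b) * (card K * out_rate U q a + (\<Sum>j\<in>K-{b}. qk (a,b) (a,j)))"
      using ab k_pos by (simp add: pk_def distrib_left)
    also have "\<dots> = pk (a,b) * out_rate (U \<times> K) qk (a,b)"
      by (simp add: out_rate_def sum_Times_Diff_singleton[OF U K(1) ab] outflow_across[unfolded out_rate_def])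
    finally show "(\<Sum>x\<in>U \<times> K - {(a,b)}. pk x * qk x (a,b)) = pk (a,b) * out_rate (U \<times> K) qk (a,b)" .
  qed
  ultimately show ?thesis
    by (simp add: stationary_dist_iff_balanced U K(1) pk_def)
qed

theorem proposition4:
  fixes n k :: nat
    and q :: "nat \<Rightarrow> nat \<Rightarrow> real"
    and qk :: "nat \<times> nat \<Rightarrow> nat \<times> nat \<Rightarrow> real"
  assumes "k \<ge> 1"
    and "pcmc_rates {1..n} q"
    and "pcmc_rates ({1..n} \<times> {1..k}) qk"
    and "\<And>m m' j j'. m \<in> {1..n} \<Longrightarrow> m' \<in> {1..n} \<Longrightarrow> j \<in> {1..k} \<Longrightarrow> j' \<in> {1..k} \<Longrightarrow>
           m \<noteq> m' \<Longrightarrow> qk (m, j) (m', j') = q m m'"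
    and "\<And>m j j'. m \<in> {1..n} \<Longrightarrow> j \<in> {1..k} \<Longrightarrow> j' \<in> {1..k} \<Longrightarrow>
           j \<noteq> j' \<Longrightarrow> qk (m, j) (m, j') = qk (m, j') (m, j)"
  shows "\<forall>m\<in>{1..n}. pcmc_prob {1..n} q m = (\<Sum>j=1..k. pcmc_prob ({1..n} \<times> {1..k}) qk (m, j))"
proof
  fix m assume m: "m \<in> {1..n}"
  define p where "p = pcmc_pi {1..n} q"
  have "stationary_dist {1..n} q p"
    unfolding p_def using m assms(2) by (auto intro: stationary_dist_pcmc_pi)
  then have "stationary_dist ({1..n} \<times> {1..k}) qk
               (\<lambda>x. if x \<in> {1..n} \<times> {1..k} then p (fst x) / card {1..k} else 0)"
    using assms(1,4,5) by (intro stationary_dist_copies) auto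
  then have "pcmc_pi ({1..n} \<times> {1..k}) qk (m, j) = p m / k" if "j \<in> {1..k}" for j
    using pcmc_pi_eqI[OF assms(3)] m that by simp
  then show "pcmc_prob {1..n} q m = (\<Sum>j=1..k. pcmc_prob ({1..n} \<times> {1..k}) qk (m, j))"
    using assms(1) by (simp add: pcmc_prob_def p_def)
qed

end
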